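(* Let $\langle\mathcal S,\leadsto\rangle$ be a protein transition system over a set $\mathcal R_\kappa$ of monotone and anti-monotone $\kappa$-reactions. For $\kappa$-solutions $S,T$: if $\Gamma_1;\Gamma_2\vdash S$ and $S\leadsto T$, then $\Gamma_1;\Gamma_2\vdash T$.
   Context: $\kappa$-calculus. Fix a set of protein names $\mathcal P$ and a countable set of names $\mathcal N$. An interface is a finite map $\rho$ from sites to $\mathcal N\cup\{h,v\}$, written as a sum of atoms $i$ (visible), $\bar i$ (hidden), $i^x$ (tied to $x$); $fn(\rho)$ is the set of names in its image and $|\rho,x|=|\{i:\rho(i)=x\}|$. $\kappa$-solutions: $S,T::=\mathbf 0\mid A(\rho)\mid S,T\mid(x)(S)$ with $A\in\mathcal P$, $x\in\mathcal N$; $(x)$ is the only binder, $fn$ as usual. Structural equivalence $\equiv$: least congruence containing $\alpha$-equivalence with "," associative and commutative with unit $\mathbf 0$, and scope laws $(x)(S,T)\equiv((x)S),T$ if $x\notin fn(T)$, $(x)(y)S\equiv(y)(x)S$, $(x)\mathbf 0\equiv\mathbf 0$. A solution is graph-like if every free name occurs at most twice and every binder binds 0 or 2 occurrences. Connected solutions: $A(\rho)$ is connected; if $S$ is connected so is $(x)(S)$; if $S,T$ are connected and $fn(S)\cap fn(T)\ne\emptyset$ then $S,T$ is connected; connectedness is closed under $\equiv$. Growing relation on interfaces: $\tilde x\vdash\bar i\rhd i$; $\tilde x\vdash i\rhd\bar i$; $\tilde x\vdash i\rhd i^x$ if $x\in\tilde x$; $\tilde x\vdash\rho\rhd\rho$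 if $\tilde x\cap fn(\rho)=\emptyset$; if $\tilde x\vdash\rho\rhd\sigma$ and $\tilde x\vdash\rho'\rhd\sigma'$ then $\tilde x\vdash\rho+\rho'\rhd\sigma+\sigma'$. Growing relation on solutions: $\tilde x\vdash\mathbf 0\rhd\mathbf 0$; if $\tilde x\vdash S\rhd T$ and $\tilde x\vdash\rho\rhd\sigma$ then $\tilde x\vdash S,A(\rho)\rhd T,A(\sigma)$; if $\tilde x\vdash S\rhd T$ and $fn(\sigma)\subseteq\tilde x$ then $\tilde x\vdash S\rhd T,A(\sigma)$. $L\to(\tilde x)R$ is a monotone reaction if $\tilde x\vdash L\rhd R$, $L$ and $(\tilde x)R$ are graph-like and $R$ is connected; $(\tilde x)L\to R$ is anti-monotone if $R\to(\tilde x)L$ is monotone. Given a set $\mathcal R_\kappa$ of monotone and anti-monotone reactions, a protein transition system is $\langle\mathcal S,\leadsto\rangle$ with $\mathcal S$ a set of $\kappa$-solutions and $\leadsto$ the least relation on $\mathcal S$ containing $\mathcal R_\kappa$ and closed under $\equiv$, composition (if $S\leadsto T$ then $S,U\leadsto T,U$) and name restriction (if $S\leadsto T$ then $(x)S\leadsto(x)T$). Typing judgements $\Gamma_1;\Gamma_2\vdash S$ ($\Gamma_1,\Gamma_2$ disjoint finite sets; comma = disjoint union): $\emptyset;\emptyset\vdash\mathbf 0$; if $|\rho,x|\le2$ for all $x\in fn(\rho)$ then $\{x:|\rho,x|=1\};\{x:|\rho,x|=2\}\vdash A(\rho)$; if $\Gamma_1;\Gamma_2\vdash S$ and $x\notin\Gamma_1$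 then $\Gamma_1;\Gamma_2\setminus\{x\}\vdash(x)S$; if $\Gamma_1,\Gamma;\Gamma_2\vdash S$, $\Delta_1,\Gamma;\Delta_2\vdash T$ and $(\Gamma_1\cup\Gamma_2)\cap(\Delta_1\cup\Delta_2)=\emptyset$ then $\Gamma_1,\Delta_1;\Gamma_2,\Delta_2,\Gamma\vdash S,T$. *)

theory Defs
  imports Main "HOL-Library.Finite_Map" "HOL-Library.Countable"
begin

datatype 'n ival = Vis | Hid | Tied 'n

type_synonym ('s, 'n) iface = "('s, 'n ival) fmap"

datatype ('p, 's, 'n) sol =
    Zero
  | Prot 'p "('s, 'n) iface"
  | Par "('p, 's, 'n) sol" "('p, 's, 'n) sol"
  | Res 'n "('p, 's, 'n) sol"

definition atom :: "'s \<Rightarrow> 'n ival \<Rightarrow> ('s, 'n) iface" where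
  "atom i v = fmupd i v fmempty"

definition isum :: "('s, 'n) iface \<Rightarrow> ('s, 'n) iface \<Rightarrow> ('s, 'n) iface" where
  "isum \<rho> \<rho>' = \<rho> ++\<^sub>f \<rho>'"

definition ifn :: "('s, 'n) iface \<Rightarrow> 'n set" where
  "ifn \<rho> = {x. \<exists>i. fmlookup \<rho> i = Some (Tied x)}"

definition icount :: "('s, 'n) iface \<Rightarrow> 'n \<Rightarrow> nat" where
  "icount \<rho> x = card {i. fmlookup \<rho> i = Some (Tied x)}"

primrec fn :: "('p, 's, 'n) sol \<Rightarrow> 'n set" where
  "fn Zero = {}"
| "fn (Prot A \<rho>) = ifn \<rho>"
| "fn (Par S T) = fn S \<union> fn T"
| "fn (Res x S) = fn S - {x}"

primrec occ :: "'n \<Rightarrow> ('p, 's, 'n) sol \<Rightarrow> nat" where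
  "occ x Zero = 0"
| "occ x (Prot A \<rho>) = icount \<rho> x"
| "occ x (Par S T) = occ x S + occ x T"
| "occ x (Res y S) = (if y = x then 0 else occ x S)"

definition ress :: "'n list \<Rightarrow> ('p, 's, 'n) sol \<Rightarrow> ('p, 's, 'n) sol" where
  "ress xs S = foldr Res xs S"

definition swapn :: "'n \<Rightarrow> 'n \<Rightarrow> 'n \<Rightarrow> 'n" where
  "swapn x y z = (if z = x then y else if z = y then x else z)"

definition swap_sol :: "'n \<Rightarrow> 'n \<Rightarrow> ('p, 's, 'n) sol \<Rightarrow> ('p, 's, 'n) sol" where
  "swap_sol x y S = map_sol id (swapn x y) S"

inductive streq :: "('p, 's, 'n) sol \<Rightarrow> ('p, 's, 'n) sol \<Rightarrow> bool" where
  refl: "streq S S"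
| sym: "streq S T \<Longrightarrow> streq T S"
| trans: "streq S T \<Longrightarrow> streq T U \<Longrightarrow> streq S U"
| par_cong: "streq S S' \<Longrightarrow> streq T T' \<Longrightarrow> streq (Par S T) (Par S' T')"
| res_cong: "streq S S' \<Longrightarrow> streq (Res x S) (Res x S')"
| alpha: "y \<notin> fn S \<Longrightarrow> streq (Res x S) (Res y (swap_sol x y S))"
| par_assoc: "streq (Par (Par S T) U) (Par S (Par T U))"
| par_comm: "streq (Par S T) (Par T S)"
| par_unit: "streq (Par S Zero) S"
| scope: "x \<notin> fn T \<Longrightarrow> streq (Res x (Par S T)) (Par (Res x S) T)"
| res_swap: "streq (Res x (Res y S)) (Res y (Res x S))"
| res_zero: "streq (Res x Zero) Zero"

primrec binders_ok :: "('p, 's, 'n) sol \<Rightarrow> bool" where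
  "binders_ok Zero = True"
| "binders_ok (Prot A \<rho>) = True"
| "binders_ok (Par S T) = (binders_ok S \<and> binders_ok T)"
| "binders_ok (Res x S) = ((occ x S = 0 \<or> occ x S = 2) \<and> binders_ok S)"

definition graph_like :: "('p, 's, 'n) sol \<Rightarrow> bool" where
  "graph_like S \<longleftrightarrow> (\<forall>x \<in> fn S. occ x S \<le> 2) \<and> binders_ok S"

inductive connected :: "('p, 's, 'n) sol \<Rightarrow> bool" where
  prot: "connected (Prot A \<rho>)"
| res: "connected S \<Longrightarrow> connected (Res x S)"
| par: "connected S \<Longrightarrow> connected T \<Longrightarrow> fn S \<inter> fn T \<noteq> {} \<Longrightarrow> connected (Par S T)"
| equiv: "connected S \<Longrightarrow> streq S T \<Longrightarrow> connected T"

inductive grow_if :: "'n set \<Rightarrow> ('s, 'n) iface \<Rightarrow> ('s, 'n) iface \<Rightarrow> bool" where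
  hid_vis: "grow_if X (atom i Hid) (atom i Vis)"
| vis_hid: "grow_if X (atom i Vis) (atom i Hid)"
| vis_tied: "x \<in> X \<Longrightarrow> grow_if X (atom i Vis) (atom i (Tied x))"
| same: "X \<inter> ifn \<rho> = {} \<Longrightarrow> grow_if X \<rho> \<rho>"
| sum: "grow_if X \<rho> \<sigma> \<Longrightarrow> grow_if X \<rho>' \<sigma>' \<Longrightarrow>
        fmdom \<rho> |\<inter>| fmdom \<rho>' = {||} \<Longrightarrow> fmdom \<sigma> |\<inter>| fmdom \<sigma>' = {||} \<Longrightarrow>
        grow_if X (isum \<rho> \<rho>') (isum \<sigma> \<sigma>')"

inductive grow_sol :: "'n set \<Rightarrow> ('p, 's, 'n) sol \<Rightarrow> ('p, 's, 'n) sol \<Rightarrow> bool" where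
  zero: "grow_sol X Zero Zero"
| prot: "grow_sol X S T \<Longrightarrow> grow_if X \<rho> \<sigma> \<Longrightarrow> grow_sol X (Par S (Prot A \<rho>)) (Par T (Prot A \<sigma>))"
| new: "grow_sol X S T \<Longrightarrow> ifn \<sigma> \<subseteq> X \<Longrightarrow> grow_sol X S (Par T (Prot A \<sigma>))"

definition monotone_reaction :: "('p, 's, 'n) sol \<Rightarrow> 'n list \<Rightarrow> ('p, 's, 'n) sol \<Rightarrow> bool" where
  "monotone_reaction L xs R \<longleftrightarrow>
     grow_sol (set xs) L R \<and> graph_like L \<and> graph_like (ress xs R) \<and> connected R"

definition is_monotone :: "('p, 's, 'n) sol \<times> ('p, 's, 'n) sol \<Rightarrow> bool" where
  "is_monotone r \<longleftrightarrow> (\<exists>L xs R. r = (L, ress xs R) \<and> monotone_reaction L xs R)"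

definition is_antimonotone :: "('p, 's, 'n) sol \<times> ('p, 's, 'n) sol \<Rightarrow> bool" where
  "is_antimonotone r \<longleftrightarrow> is_monotone (snd r, fst r)"

inductive pts_step :: "('p, 's, 'n) sol set \<Rightarrow> (('p, 's, 'n) sol \<times> ('p, 's, 'n) sol) set
    \<Rightarrow> ('p, 's, 'n) sol \<Rightarrow> ('p, 's, 'n) sol \<Rightarrow> bool"
  for SS Rk where
  react: "(S, T) \<in> Rk \<Longrightarrow> S \<in> SS \<Longrightarrow> T \<in> SS \<Longrightarrow> pts_step SS Rk S T"
| equiv: "streq S S' \<Longrightarrow> pts_step SS Rk S' T' \<Longrightarrow> streq T' T \<Longrightarrow> S \<in> SS \<Longrightarrow> T \<in> SS
          \<Longrightarrow> pts_step SS Rk S T"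
| comp: "pts_step SS Rk S T \<Longrightarrow> Par S U \<in> SS \<Longrightarrow> Par T U \<in> SS
          \<Longrightarrow> pts_step SS Rk (Par S U) (Par T U)"
| restr: "pts_step SS Rk S T \<Longrightarrow> Res x S \<in> SS \<Longrightarrow> Res x T \<in> SS
          \<Longrightarrow> pts_step SS Rk (Res x S) (Res x T)"

inductive typed :: "'n set \<Rightarrow> 'n set \<Rightarrow> ('p, 's, 'n) sol \<Rightarrow> bool" where
  zero: "typed {} {} Zero"
| prot: "(\<forall>x \<in> ifn \<rho>. icount \<rho> x \<le> 2) \<Longrightarrow>
         typed {x. icount \<rho> x = 1} {x. icount \<rho> x = 2} (Prot A \<rho>)"
| res: "typed G1 G2 S \<Longrightarrow> x \<notin> G1 \<Longrightarrow> typed G1 (G2 - {x}) (Res x S)"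
| par: "typed (G1 \<union> G) G2 S \<Longrightarrow> typed (D1 \<union> G) D2 T \<Longrightarrow>
        G1 \<inter> G = {} \<Longrightarrow> D1 \<inter> G = {} \<Longrightarrow>
        (G1 \<union> G2) \<inter> (D1 \<union> D2) = {} \<Longrightarrow>
        G \<inter> G2 = {} \<Longrightarrow> G \<inter> D2 = {} \<Longrightarrow>
        typed (G1 \<union> D1) (G2 \<union> D2 \<union> G) (Par S T)"

end

theory Submission
  imports Defs
begin

(* The proof rests on the observation that a typing judgement carries no
   information beyond occurrence counts:  G1;G2 |- S  holds iff S is graph-like,
   G1 is the set of names occurring free exactly once in S and G2 the set of
   names occurring free exactly twice (typed_iff_graph_like).  It therefore
   suffices to show that a transition S ~> T preserves the free-occurrence count
   of every name and preserves graph-likeness (pts_step_preserves). *)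

lemma icount_not_ifn: "x \<notin> ifn \<rho> \<Longrightarrow> icount \<rho> x = 0"
  unfolding icount_def ifn_def by simp

lemma occ_not_fn: "x \<notin> fn S \<Longrightarrow> occ x S = 0"
  by (induction S) (auto simp: icount_not_ifn)

lemma graph_like_iff: "graph_like S \<longleftrightarrow> (\<forall>x. occ x S \<le> 2) \<and> binders_ok S"
  unfolding graph_like_def by (metis occ_not_fn zero_le)

lemma graph_like_Par_iff:
  "graph_like (Par S T) \<longleftrightarrow> (\<forall>x. occ x S + occ x T \<le> 2) \<and> binders_ok S \<and> binders_ok T"
  by (simp add: graph_like_iff)

lemma graph_like_Res_iff:
  "graph_like (Res x S) \<longleftrightarrow> graph_like S \<and> (occ x S = 0 \<or> occ x S = 2)"
proof
  assume h: "graph_like (Res x S)"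
  then have bound: "occ x S = 0 \<or> occ x S = 2" and "binders_ok S"
    by (auto simp: graph_like_iff)
  moreover have "occ z S \<le> 2" for z
    using h bound by (cases "z = x") (auto simp: graph_like_iff split: if_splits)
  ultimately show "graph_like S \<and> (occ x S = 0 \<or> occ x S = 2)"
    by (simp add: graph_like_iff)
qed (auto simp: graph_like_iff)

lemma swapn_swapn [simp]: "swapn x y (swapn x y z) = z"
  unfolding swapn_def by auto

lemma inj_swapn: "inj (swapn x y)"
  by (metis injI swapn_swapn)

lemma icount_rename:
  assumes "inj f"
  shows "icount (fmmap (map_ival f) \<rho>) (f x) = icount \<rho> x"
proof -
  have "fmlookup (fmmap (map_ival f) \<rho>) i = Some (Tied (f x)) \<longleftrightarrow> fmlookup \<rho> i = Some (Tied x)" for i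
    using assms by (cases "fmlookup \<rho> i"; cases "the (fmlookup \<rho> i)") (auto simp: inj_eq)
  then show ?thesis unfolding icount_def by simp
qed

lemma occ_map_swapn: "occ (swapn x y z) (map_sol id (swapn x y) S) = occ z S"
  by (induction S) (auto simp: icount_rename[OF inj_swapn] inj_eq[OF inj_swapn])

lemma occ_swap_sol: "occ z (swap_sol x y S) = occ (swapn x y z) S"
  unfolding swap_sol_def by (metis occ_map_swapn swapn_swapn)

lemma binders_ok_swap_sol: "binders_ok (swap_sol x y S) = binders_ok S"
  by (induction S) (auto simp: swap_sol_def occ_map_swapn[of x y, unfolded])

lemma streq_preserves:
  "streq S T \<Longrightarrow> (\<forall>z. occ z S = occ z T) \<and> binders_ok S = binders_ok T"
proof (induction rule: streq.induct)
  case (alpha y S x)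
  then have "occ y S = 0" by (simp add: occ_not_fn)
  then show ?case
    by (auto simp: occ_swap_sol swapn_def binders_ok_swap_sol)
next
  case (scope x T S)
  then show ?case using occ_not_fn[of x T] by auto
qed auto

lemma graph_like_streq: "streq S T \<Longrightarrow> graph_like S \<longleftrightarrow> graph_like T"
  using streq_preserves by (metis graph_like_iff)

lemma icount_atom_untied: "v \<noteq> Tied z \<Longrightarrow> icount (atom i v) z = 0"
  unfolding icount_def atom_def by simp

lemma ifn_atom_untied: "(\<And>z. v \<noteq> Tied z) \<Longrightarrow> ifn (atom i v) = {}"
  unfolding ifn_def atom_def by simp

lemma ifn_isum: "ifn (isum \<rho> \<rho>') \<subseteq> ifn \<rho> \<union> ifn \<rho>'"
  unfolding ifn_def isum_def by (auto simp: fmlookup_add split: if_splits)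

lemma icount_isum:
  assumes "fmdom \<rho> |\<inter>| fmdom \<rho>' = {||}"
  shows "icount (isum \<rho> \<rho>') z = icount \<rho> z + icount \<rho>' z"
proof -
  let ?A = "{i. fmlookup \<rho> i = Some (Tied z)}" and ?B = "{i. fmlookup \<rho>' i = Some (Tied z)}"
  have A: "i |\<in>| fmdom \<rho>" if "i \<in> ?A" for i
    using that by (intro fmdomI) simp
  have B: "i |\<in>| fmdom \<rho>'" if "i \<in> ?B" for i
    using that by (intro fmdomI) simp
  have dom_disj: "\<not> (i |\<in>| fmdom \<rho> \<and> i |\<in>| fmdom \<rho>')" for i
    using assms by (metis fempty_iff finterI)
  have finite: "finite ?A" "finite ?B"
    by (rule finite_subset[of _ "fset (fmdom \<rho>)"]; use A in auto)
      (rule finite_subset[of _ "fset (fmdom \<rho>')"]; use B in auto)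
  have disj: "?A \<inter> ?B = {}"
    using A B dom_disj by blast
  have "fmlookup (isum \<rho> \<rho>') i = Some (Tied z) \<longleftrightarrow> i \<in> ?A \<union> ?B" for i
    using A B dom_disj unfolding isum_def by (cases "i |\<in>| fmdom \<rho>'") (auto simp: fmlookup_add)
  then have "{i. fmlookup (isum \<rho> \<rho>') i = Some (Tied z)} = ?A \<union> ?B"
    by blast
  then show ?thesis
    unfolding icount_def using card_Un_disjoint[OF finite disj] by simp
qed

lemma grow_if_preserves:
  "grow_if X \<rho> \<sigma> \<Longrightarrow> X \<inter> ifn \<rho> = {} \<and> (\<forall>z. z \<notin> X \<longrightarrow> icount \<rho> z = icount \<sigma> z)"
proof (induction rule: grow_if.induct)
  case (sum X \<rho> \<sigma> \<rho>' \<sigma>')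
  then show ?case
    using ifn_isum[of \<rho> \<rho>'] icount_isum[OF sum.hyps(3)] icount_isum[OF sum.hyps(4)] by auto
next
  case (vis_tied x X i)
  then have "icount (atom i (Tied x)) z = 0" if "z \<notin> X" for z
    using that by (intro icount_atom_untied) auto
  then show ?case by (simp add: ifn_atom_untied icount_atom_untied)
qed (auto simp: ifn_atom_untied icount_atom_untied)

lemma grow_sol_preserves:
  "grow_sol X L R \<Longrightarrow> (\<forall>z\<in>X. occ z L = 0) \<and> (\<forall>z. z \<notin> X \<longrightarrow> occ z L = occ z R)"
proof (induction rule: grow_sol.induct)
  case (prot X S T \<rho> \<sigma> A)
  then show ?case using grow_if_preserves[OF prot(2)] icount_not_ifn by fastforce
next
  case (new X S T \<sigma> A)
  then show ?case using icount_not_ifn by fastforce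
qed auto

lemma occ_ress: "occ z (ress xs R) = (if z \<in> set xs then 0 else occ z R)"
  unfolding ress_def by (induction xs) auto

lemma monotone_reaction_occ:
  "monotone_reaction L xs R \<Longrightarrow> occ z L = occ z (ress xs R)"
  unfolding monotone_reaction_def using grow_sol_preserves occ_ress by metis

lemma reaction_preserves:
  assumes "is_monotone (S, T) \<or> is_antimonotone (S, T)"
  shows "(\<forall>z. occ z S = occ z T) \<and> graph_like S \<and> graph_like T"
  using assms unfolding is_antimonotone_def is_monotone_def
  by (metis fst_conv snd_conv monotone_reaction_def monotone_reaction_occ)

lemma pts_step_preserves:
  assumes reactions: "\<forall>r \<in> Rk. is_monotone r \<or> is_antimonotone r"
  shows "pts_step SS Rk S T \<Longrightarrow> (\<forall>z. occ z S = occ z T) \<and> (graph_like S \<longrightarrow> graph_like T)"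
proof (induction rule: pts_step.induct)
  case (react S T)
  then show ?case using reactions reaction_preserves by blast
next
  case (equiv S S' T' T)
  then show ?case using streq_preserves graph_like_streq by metis
next
  case (comp S T U)
  have "graph_like S" if "graph_like (Par S U)"
    using that by (auto simp: graph_like_Par_iff graph_like_iff intro: add_leD1)
  with comp show ?case by (auto simp: graph_like_Par_iff graph_like_iff)
next
  case (restr S T x)
  then show ?case by (simp add: graph_like_Res_iff)
qed

lemma typed_graph_like:
  "typed G1 G2 S \<Longrightarrow> graph_like S \<and> G1 = {x. occ x S = 1} \<and> G2 = {x. occ x S = 2}"
proof (induction rule: typed.induct)
  case (prot \<rho> A)
  then show ?case by (auto simp: graph_like_iff icount_not_ifn)
next
  case (res G1 G2 S x)
  then have "occ x S = 0 \<or> occ x S = 2"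
    by (auto simp: graph_like_iff dest: spec[of _ x])
  with res show ?case by (auto simp: graph_like_Res_iff)
next
  case (par G1 G G2 S D1 D2 T)
  have le: "occ z S \<le> 2" "occ z T \<le> 2" for z
    using par.IH by (auto simp: graph_like_iff)
  (* Each name is classified by its pair of counts in S and T; the disjointness
     side conditions rule out every pair whose sum exceeds 2. *)
  have counts: "occ z S + occ z T \<le> 2 \<and> (z \<in> G1 \<union> D1 \<longleftrightarrow> occ z S + occ z T = 1)
      \<and> (z \<in> G2 \<union> D2 \<union> G \<longleftrightarrow> occ z S + occ z T = 2)" for z
  proof -
    have "occ z S = 0 \<or> occ z S = 1 \<or> occ z S = 2" "occ z T = 0 \<or> occ z T = 1 \<or> occ z T = 2"
      using le[of z] by linarith+
    moreover have "z \<in> G1 \<union> G \<longleftrightarrow> occ z S = 1" "z \<in> G2 \<longleftrightarrow> occ z S = 2"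
      "z \<in> D1 \<union> G \<longleftrightarrow> occ z T = 1" "z \<in> D2 \<longleftrightarrow> occ z T = 2"
      using par.IH by auto
    moreover have "z \<notin> G1 \<inter> G" "z \<notin> D1 \<inter> G" "z \<notin> (G1 \<union> G2) \<inter> (D1 \<union> D2)"
      "z \<notin> G \<inter> G2" "z \<notin> G \<inter> D2"
      using par.hyps by blast+
    ultimately show ?thesis by (elim disjE) (simp_all, blast+)
  qed
  then show ?case using par.IH by (auto simp: graph_like_Par_iff graph_like_iff)
qed (simp add: graph_like_iff)

(* The typing rule for composition, instantiated with count-defined contexts:
   the shared context G consists of the names occurring once on each side. *)
lemma typed_Par_counts:
  assumes S: "typed {z. occ z S = 1} {z. occ z S = 2} S"
    and T: "typed {z. occ z T = 1} {z. occ z T = 2} T"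
    and le: "\<And>z. occ z S + occ z T \<le> 2"
  shows "typed {z. occ z (Par S T) = 1} {z. occ z (Par S T) = 2} (Par S T)"
proof -
  let ?G1 = "{z. occ z S = 1 \<and> occ z T = 0}" and ?D1 = "{z. occ z T = 1 \<and> occ z S = 0}"
    and ?G = "{z. occ z S = 1 \<and> occ z T = 1}"
  have "occ z S = 1 \<longleftrightarrow> z \<in> ?G1 \<union> ?G" "occ z T = 1 \<longleftrightarrow> z \<in> ?D1 \<union> ?G"
    "occ z S + occ z T = 1 \<longleftrightarrow> z \<in> ?G1 \<union> ?D1"
    "occ z S + occ z T = 2 \<longleftrightarrow> occ z S = 2 \<or> occ z T = 2 \<or> z \<in> ?G"
    "\<not> (occ z S = 2 \<and> occ z T = 2)" for z
    using le[of z] by auto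
  then have split1: "{z. occ z S = 1} = ?G1 \<union> ?G" "{z. occ z T = 1} = ?D1 \<union> ?G"
    and par1: "{z. occ z (Par S T) = 1} = ?G1 \<union> ?D1"
    and par2: "{z. occ z (Par S T) = 2} = {z. occ z S = 2} \<union> {z. occ z T = 2} \<union> ?G"
    and disj: "\<And>z. \<not> (occ z S = 2 \<and> occ z T = 2)"
    by auto
  have "typed (?G1 \<union> ?D1) ({z. occ z S = 2} \<union> {z. occ z T = 2} \<union> ?G) (Par S T)"
    using S T disj unfolding split1 by (intro typed.par) auto
  then show ?thesis unfolding par1 par2 .
qed

lemma graph_like_typed: "graph_like S \<Longrightarrow> typed {x. occ x S = 1} {x. occ x S = 2} S"
proof (induction S)
  case Zero
  then show ?case using typed.zero by simp
next
  case (Prot A \<rho>)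
  then show ?case using typed.prot[of \<rho> A] by (simp add: graph_like_iff)
next
  case (Par S T)
  then have "graph_like S" "graph_like T" "\<And>z. occ z S + occ z T \<le> 2"
    by (auto simp: graph_like_Par_iff graph_like_iff) (meson add_leD1 add_leD2)+
  then show ?case using Par.IH typed_Par_counts by blast
next
  case (Res x S)
  then have "graph_like S" and x: "occ x S \<noteq> 1"
    by (auto simp: graph_like_Res_iff)
  then have "typed {z. occ z S = 1} ({z. occ z S = 2} - {x}) (Res x S)"
    using Res.IH typed.res by fastforce
  moreover have "{z. occ z (Res x S) = 1} = {z. occ z S = 1}" using x by auto
  moreover have "{z. occ z (Res x S) = 2} = {z. occ z S = 2} - {x}" by auto
  ultimately show ?case by simp
qed

lemma typed_iff_graph_like:
  "typed G1 G2 S \<longleftrightarrow> graph_like S \<and> G1 = {x. occ x S = 1} \<and> G2 = {x. occ x S = 2}"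
  using typed_graph_like graph_like_typed by blast

theorem mainTheorem11:
  fixes SS :: "('p, 's, 'n::countable) sol set"
    and Rk :: "(('p, 's, 'n) sol \<times> ('p, 's, 'n) sol) set"
    and S T :: "('p, 's, 'n) sol"
  assumes "infinite (UNIV :: 'n set)"
    and "\<forall>r \<in> Rk. is_monotone r \<or> is_antimonotone r"
    and "typed G1 G2 S"
    and "pts_step SS Rk S T"
  shows "typed G1 G2 T"
proof -
  have S: "graph_like S" "G1 = {x. occ x S = 1}" "G2 = {x. occ x S = 2}"
    using assms(3) by (simp_all add: typed_iff_graph_like)
  have "\<forall>z. occ z S = occ z T" and "graph_like T"
    using pts_step_preserves[OF assms(2) assms(4)] S(1) by auto
  then show ?thesis
    using S by (simp add: typed_iff_graph_like)
qed

end
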